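(* Let $p$ be a prime, $d\ge1$, and $w:\mathbb{Z}_p^d\to[0,\infty)$, not identically zero, with $\operatorname{supp}(w)=E$. If some $B\subseteq\mathbb{Z}_p^d$ is a spectrum for $L^2(w)$, then $w=c\,1_E$ for some constant $c>0$.
   Context: $\mathbb{Z}_p^d$ is the $d$-dimensional vector space over the field $\mathbb{Z}_p$, $x\cdot b=\sum_i x_ib_i$, $\chi(t)=e^{2\pi i t/p}$. $1_E$ is the indicator of $E$. For $w:\mathbb{Z}_p^d\to[0,\infty)$, $\operatorname{supp}(w)=\{x:w(x)>0\}$ and $L^2(w)$ is the space of functions on $\operatorname{supp}(w)$ with inner product $\langle f,h\rangle_w=\sum_{x}f(x)\overline{h(x)}w(x)$. A set $B\subseteq\mathbb{Z}_p^d$ is a spectrum for $L^2(w)$ if the functions $\chi_b(x)=\chi(x\cdot b)$, $b\in B$, form an orthogonal basis of $L^2(w)$: $\sum_x\chi(x\cdot(b-b'))w(x)=0$ for all distinct $b,b'\in B$, and every function on $\operatorname{supp}(w)$ is a linear combination of the $\chi_b$ restricted to $\operatorname{supp}(w)$. *)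

theory Defs
  imports "HOL-Computational_Algebra.Primes" "HOL-Library.Indicator_Function"
begin

text \<open>Elements of Z_p^d are represented as functions nat => int with coordinates i < d
  in {0..<p} and all other coordinates 0.\<close>

definition vecs :: "nat \<Rightarrow> nat \<Rightarrow> (nat \<Rightarrow> int) set" where
  "vecs p d = {x. (\<forall>i<d. 0 \<le> x i \<and> x i < int p) \<and> (\<forall>i\<ge>d. x i = 0)}"

definition dotp :: "nat \<Rightarrow> (nat \<Rightarrow> int) \<Rightarrow> (nat \<Rightarrow> int) \<Rightarrow> int" where
  "dotp d x b = (\<Sum>i<d. x i * b i)"

text \<open>chi(t) = exp(2 pi i t / p); it is p-periodic, so integer representatives may be used.\<close>
definition chi :: "nat \<Rightarrow> int \<Rightarrow> complex" where
  "chi p t = exp (2 * of_real pi * \<i> * of_int t / of_nat p)"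

definition supp_w :: "nat \<Rightarrow> nat \<Rightarrow> ((nat \<Rightarrow> int) \<Rightarrow> real) \<Rightarrow> (nat \<Rightarrow> int) set" where
  "supp_w p d w = {x \<in> vecs p d. w x > 0}"

definition is_spectrum :: "nat \<Rightarrow> nat \<Rightarrow> ((nat \<Rightarrow> int) \<Rightarrow> real) \<Rightarrow> (nat \<Rightarrow> int) set \<Rightarrow> bool" where
  "is_spectrum p d w B \<longleftrightarrow>
     B \<subseteq> vecs p d \<and>
     (\<forall>b\<in>B. \<forall>b'\<in>B. b \<noteq> b' \<longrightarrow>
        (\<Sum>x\<in>vecs p d. chi p (dotp d x b - dotp d x b') * of_real (w x)) = 0) \<and>
     (\<forall>f :: (nat \<Rightarrow> int) \<Rightarrow> complex. \<exists>a :: (nat \<Rightarrow> int) \<Rightarrow> complex.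
        \<forall>x\<in>supp_w p d w. f x = (\<Sum>b\<in>B. a b * chi p (dotp d x b)))"

end

theory Submission
  imports Defs
begin

text \<open>Expand the point mass at a point y of the support in the spectrum. Orthogonality
  identifies each coefficient as \<open>cnj (\<chi>\<^sub>b y) w(y) / \<Sum>w\<close>, and since the characters are
  unimodular, evaluating the expansion at y gives \<open>|B| w(y) = \<Sum>w\<close>. So w takes the same
  value on every point of its support. Neither primality of p nor the group structure
  of the index set is needed.\<close>

lemma coefficient_of_orthogonal_expansion:
  fixes w :: "'a \<Rightarrow> real" and e :: "'b \<Rightarrow> 'a \<Rightarrow> complex"
  assumes "finite V" "finite B" "b' \<in> B"
    and unimodular: "\<And>b x. e b x * cnj (e b x) = 1"
    and orth: "\<And>b b'. b \<in> B \<Longrightarrow> b' \<in> B \<Longrightarrow> b \<noteq> b' \<Longrightarrow>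
                 (\<Sum>x\<in>V. e b x * cnj (e b' x) * of_real (w x)) = 0"
    and expand: "\<And>x. x \<in> V \<Longrightarrow> w x \<noteq> 0 \<Longrightarrow> f x = (\<Sum>b\<in>B. a b * e b x)"
  shows "(\<Sum>x\<in>V. f x * cnj (e b' x) * of_real (w x)) = a b' * of_real (\<Sum>x\<in>V. w x)"
proof -
  have "(\<Sum>x\<in>V. f x * cnj (e b' x) * of_real (w x))
      = (\<Sum>x\<in>V. \<Sum>b\<in>B. a b * (e b x * cnj (e b' x) * of_real (w x)))"
  proof (rule sum.cong[OF refl])
    fix x assume "x \<in> V"
    then show "f x * cnj (e b' x) * of_real (w x)
             = (\<Sum>b\<in>B. a b * (e b x * cnj (e b' x) * of_real (w x)))"
      using expand by (cases "w x = 0") (simp_all add: sum_distrib_left mult_ac)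
  qed
  also have "\<dots> = (\<Sum>b\<in>B. a b * (\<Sum>x\<in>V. e b x * cnj (e b' x) * of_real (w x)))"
    by (subst sum.swap) (simp add: sum_distrib_left)
  also have "\<dots> = a b' * (\<Sum>x\<in>V. e b' x * cnj (e b' x) * of_real (w x))"
    using assms(2,3) orth[OF _ assms(3)] by (simp add: sum.remove)
  also have "\<dots> = a b' * of_real (\<Sum>x\<in>V. w x)"
    by (simp add: unimodular)
  finally show ?thesis .
qed

lemma weight_on_support_of_orthogonal_spanning_family:
  fixes w :: "'a \<Rightarrow> real" and e :: "'b \<Rightarrow> 'a \<Rightarrow> complex"
  assumes "finite V" "finite B"
    and nonneg: "\<And>x. x \<in> V \<Longrightarrow> w x \<ge> 0"
    and unimodular: "\<And>b x. e b x * cnj (e b x) = 1"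
    and orth: "\<And>b b'. b \<in> B \<Longrightarrow> b' \<in> B \<Longrightarrow> b \<noteq> b' \<Longrightarrow>
                 (\<Sum>x\<in>V. e b x * cnj (e b' x) * of_real (w x)) = 0"
    and span: "\<And>f. \<exists>a. \<forall>x\<in>V. w x > 0 \<longrightarrow> f x = (\<Sum>b\<in>B. a b * e b x)"
    and "y \<in> V" "w y > 0"
  shows "card B * w y = (\<Sum>x\<in>V. w x)"
proof -
  define S where "S = (\<Sum>x\<in>V. w x)"
  define \<delta> :: "'a \<Rightarrow> complex" where "\<delta> x = (if x = y then 1 else 0)" for x
  obtain a where a: "\<forall>x\<in>V. w x > 0 \<longrightarrow> \<delta> x = (\<Sum>b\<in>B. a b * e b x)"
    using span by blast
  have expand: "\<delta> x = (\<Sum>b\<in>B. a b * e b x)" if "x \<in> V" "w x \<noteq> 0" for x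
    using a that nonneg[of x] by auto
  have coeff: "a b * of_real S = cnj (e b y) * of_real (w y)" if "b \<in> B" for b
  proof -
    have "a b * of_real S = (\<Sum>x\<in>V. \<delta> x * cnj (e b x) * of_real (w x))"
      using coefficient_of_orthogonal_expansion[OF assms(1,2) that unimodular orth expand]
      by (simp add: S_def)
    also have "\<dots> = cnj (e b y) * of_real (w y)"
      by (subst sum.remove[OF assms(1) \<open>y \<in> V\<close>]) (simp add: \<delta>_def)
    finally show ?thesis .
  qed
  have "complex_of_real S = \<delta> y * of_real S"
    by (simp add: \<delta>_def)
  also have "\<dots> = (\<Sum>b\<in>B. a b * of_real S * e b y)"
    using expand \<open>y \<in> V\<close> \<open>w y > 0\<close> by (simp add: sum_distrib_left mult_ac)
  also have "\<dots> = (\<Sum>b\<in>B. e b y * cnj (e b y) * of_real (w y))"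
    using coeff by (simp add: mult_ac)
  also have "\<dots> = complex_of_real (card B * w y)"
    by (simp add: unimodular)
  finally show ?thesis by (simp only: of_real_eq_iff S_def)
qed

lemma chi_add: "chi p a * chi p b = chi p (a + b)"
  unfolding chi_def by (simp add: exp_add[symmetric] add_divide_distrib distrib_left distrib_right)

lemma chi_eq_cis: "chi p a = cis (2 * pi * of_int a / of_nat p)"
  unfolding chi_def cis_conv_exp by (simp add: mult_ac)

lemma cnj_chi: "cnj (chi p a) = chi p (- a)"
  unfolding chi_eq_cis cis_cnj by simp

lemma chi_diff: "chi p (a - b) = chi p a * cnj (chi p b)"
  by (simp add: cnj_chi chi_add)

lemma chi_mult_cnj: "chi p a * cnj (chi p a) = 1"
  unfolding cnj_chi chi_add by (simp add: chi_def)

lemma finite_vecs: "finite (vecs p d)"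
proof -
  let ?extend = "\<lambda>g::nat \<Rightarrow> int. \<lambda>i. if i < d then g i else 0"
  have "vecs p d \<subseteq> ?extend ` (PiE {..<d} (\<lambda>_. {0..<int p}))"
  proof
    fix x assume x: "x \<in> vecs p d"
    then have "x = ?extend (restrict x {..<d})"
      and "restrict x {..<d} \<in> PiE {..<d} (\<lambda>_. {0..<int p})"
      by (auto simp: vecs_def)
    then show "x \<in> ?extend ` (PiE {..<d} (\<lambda>_. {0..<int p}))" by blast
  qed
  then show ?thesis by (rule finite_subset) (intro finite_imageI finite_PiE; simp)
qed

theorem lemma4p2:
  fixes p d :: nat and w :: "(nat \<Rightarrow> int) \<Rightarrow> real" and B :: "(nat \<Rightarrow> int) set"
  assumes "prime p" and "d \<ge> 1"
    and "\<forall>x\<in>vecs p d. w x \<ge> 0"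
    and "\<exists>x\<in>vecs p d. w x \<noteq> 0"
    and "is_spectrum p d w B"
  shows "\<exists>c>0. \<forall>x\<in>vecs p d. w x = c * indicator (supp_w p d w) x"
proof -
  let ?V = "vecs p d" and ?E = "supp_w p d w"
  have "B \<subseteq> ?V" and orth: "\<And>b b'. b \<in> B \<Longrightarrow> b' \<in> B \<Longrightarrow> b \<noteq> b' \<Longrightarrow>
      (\<Sum>x\<in>?V. chi p (dotp d x b) * cnj (chi p (dotp d x b')) * of_real (w x)) = 0"
    and span: "\<And>f. \<exists>a. \<forall>x\<in>?V. w x > 0 \<longrightarrow> f x = (\<Sum>b\<in>B. a b * chi p (dotp d x b))"
    using assms(5) unfolding is_spectrum_def supp_w_def chi_diff by blast+
  then have "finite B" using finite_vecs finite_subset by blast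
  have const: "card B * w y = (\<Sum>x\<in>?V. w x)" if "y \<in> ?E" for y
    using that weight_on_support_of_orthogonal_spanning_family[OF finite_vecs \<open>finite B\<close> _
        chi_mult_cnj orth span] assms(3)
    by (auto simp: supp_w_def)
  obtain y where y: "y \<in> ?E" using assms(3,4) by (force simp: supp_w_def)
  then have "0 < w y" and "w y \<le> (\<Sum>x\<in>?V. w x)"
    using assms(3) by (auto simp: supp_w_def intro!: member_le_sum finite_vecs)
  then have "card B \<noteq> 0" using const[OF y] by (cases "card B = 0") auto
  have "w x = w y" if "x \<in> ?E" for x
    using const[OF that] const[OF y] \<open>card B \<noteq> 0\<close> by (metis mult_cancel_left of_nat_eq_0_iff)
  then have "w x = w y * indicator ?E x" if "x \<in> ?V" for x
    using that assms(3) by (cases "x \<in> ?E") (auto simp: supp_w_def)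
  then show ?thesis using \<open>0 < w y\<close> by blast
qed

end
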